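(* Let $f=\sum a_nq^n\in S_k(\Gamma_1(N_f),\epsilon_f)$ and $g=\sum b_nq^n\in S_k(\Gamma_1(N_g),\epsilon_g)$ be normalized cuspidal Hecke eigenforms of the same weight $k$, with $p\nmid N_fN_g$, whose coefficients and character values lie in $\mathcal{O}$. If $f$ and $g$ are $p^r$-congruent, i.e. $a_m\equiv b_m\bmod p^r\mathcal{O}$ for all integers $m$ coprime to $N_fN_g$, then $\epsilon_f(p)\equiv\epsilon_g(p)\bmod p^r\mathcal{O}$.
   Context: $p$ is an odd prime with a fixed embedding $\overline{\mathbb{Q}}\hookrightarrow\mathbb{C}_p$; $E/\mathbb{Q}_p$ is a finite extension containing all Fourier coefficients of $f,g$ and values of $\epsilon_f,\epsilon_g$, and $\mathcal{O}$ is its ring of integers; $r$ is a positive integer. *)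

theory Defs
  imports "HOL-Complex_Analysis.Complex_Analysis" "HOL-Computational_Algebra.Computational_Algebra"
begin

definition dirichlet_char :: "nat \<Rightarrow> (int \<Rightarrow> complex) \<Rightarrow> bool" where
  "dirichlet_char N eps \<longleftrightarrow> N \<ge> 1 \<and> eps 1 = 1
     \<and> (\<forall>m n. eps (m * n) = eps m * eps n)
     \<and> (\<forall>n. eps (n + int N) = eps n)
     \<and> (\<forall>n. eps n \<noteq> 0 \<longleftrightarrow> coprime n (int N))"

definition upper_half_plane :: "complex set" where
  "upper_half_plane = {z. Im z > 0}"

definition modular_Gamma0_char :: "nat \<Rightarrow> nat \<Rightarrow> (int \<Rightarrow> complex) \<Rightarrow> (complex \<Rightarrow> complex) \<Rightarrow> bool" where
  "modular_Gamma0_char k N eps f \<longleftrightarrow>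
     (\<forall>a b c d z. a * d - b * c = 1 \<and> int N dvd c \<and> Im z > 0 \<longrightarrow>
        f ((of_int a * z + of_int b) / (of_int c * z + of_int d))
          = eps d * (of_int c * z + of_int d) ^ k * f z)"

text \<open>Vanishing at every cusp: for every gamma in SL_2(Z), the slashed function
  (f|_k gamma)(z) = (c z + d)^(-k) f(gamma z) tends to 0 uniformly as Im z tends to infinity.\<close>
definition vanishes_at_cusps :: "nat \<Rightarrow> (complex \<Rightarrow> complex) \<Rightarrow> bool" where
  "vanishes_at_cusps k f \<longleftrightarrow>
     (\<forall>a b c d :: int. a * d - b * c = 1 \<longrightarrow>
        (\<forall>e > 0. \<exists>Y. \<forall>z. Im z > Y \<longrightarrow>
           norm (f ((of_int a * z + of_int b) / (of_int c * z + of_int d))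
                 / (of_int c * z + of_int d) ^ k) < e))"

definition cusp_form :: "nat \<Rightarrow> nat \<Rightarrow> (int \<Rightarrow> complex) \<Rightarrow> (complex \<Rightarrow> complex) \<Rightarrow> bool" where
  "cusp_form k N eps f \<longleftrightarrow> dirichlet_char N eps \<and> f holomorphic_on upper_half_plane
     \<and> modular_Gamma0_char k N eps f \<and> vanishes_at_cusps k f"

definition has_q_expansion :: "(complex \<Rightarrow> complex) \<Rightarrow> (nat \<Rightarrow> complex) \<Rightarrow> bool" where
  "has_q_expansion f a \<longleftrightarrow>
     (\<forall>z. Im z > 0 \<longrightarrow> (\<lambda>n. a n * exp (2 * of_real pi * \<i> * of_nat n * z)) sums f z)"

text \<open>Hecke operator T_n on S_k(Gamma_1(N), eps) on q-expansions
  (Diamond--Shurman, Prop. 5.3.1): the m-th coefficient of T_n f is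
  sum over d | gcd(m,n) of eps(d) d^(k-1) a(mn/d^2).\<close>
definition hecke_coeff :: "nat \<Rightarrow> (int \<Rightarrow> complex) \<Rightarrow> nat \<Rightarrow> (nat \<Rightarrow> complex) \<Rightarrow> nat \<Rightarrow> complex" where
  "hecke_coeff k eps n a m =
     (\<Sum>d | d dvd gcd m n. eps (int d) * of_nat d ^ (k - 1) * a (m * n div (d * d)))"

definition normalized_eigenform ::
  "nat \<Rightarrow> nat \<Rightarrow> (int \<Rightarrow> complex) \<Rightarrow> (complex \<Rightarrow> complex) \<Rightarrow> (nat \<Rightarrow> complex) \<Rightarrow> bool" where
  "normalized_eigenform k N eps f a \<longleftrightarrow>
     cusp_form k N eps f \<and> has_q_expansion f a \<and> a 1 = 1 \<and>
     (\<forall>n \<ge> 1. \<exists>c. \<forall>m. hecke_coeff k eps n a m = c * a m)"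

text \<open>A fixed embedding Qbar into C_p amounts to a valuation v on the algebraic numbers
  (inside C) extending the p-adic valuation, normalised by v(p) = 1.\<close>
definition padic_valuation_alg :: "nat \<Rightarrow> (complex \<Rightarrow> real) \<Rightarrow> bool" where
  "padic_valuation_alg p v \<longleftrightarrow>
     v (of_nat p) = 1 \<and>
     (\<forall>x y. algebraic x \<and> algebraic y \<and> x \<noteq> 0 \<and> y \<noteq> 0 \<longrightarrow> v (x * y) = v x + v y) \<and>
     (\<forall>x y. algebraic x \<and> algebraic y \<and> x \<noteq> 0 \<and> y \<noteq> 0 \<and> x + y \<noteq> 0 \<longrightarrow>
            v (x + y) \<ge> min (v x) (v y))"

text \<open>x lies in O (valuation ring), and x == y mod p^r O.\<close>
definition integral_at :: "(complex \<Rightarrow> real) \<Rightarrow> complex \<Rightarrow> bool" where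
  "integral_at v x \<longleftrightarrow> algebraic x \<and> (x = 0 \<or> v x \<ge> 0)"

definition cong_ppow :: "(complex \<Rightarrow> real) \<Rightarrow> nat \<Rightarrow> complex \<Rightarrow> complex \<Rightarrow> bool" where
  "cong_ppow v r x y \<longleftrightarrow> x = y \<or> v (x - y) \<ge> real r"

end

theory Submission
  imports Defs "HOL-Algebra.Algebraic_Closure_Type"
begin

(* Since f is a normalised eigenform, T_d f = a_d f, and comparing d-th coefficients gives
   a_d^2 = \<Sum>_{e | d} \<epsilon>(e) e^(k-1) a_(d^2/e^2).  The term e = d is \<epsilon>(d) d^(k-1); every other
   term involves a smaller divisor e of d and a coefficient at an index prime to the level, so
   strong induction on d gives \<epsilon>_f(d) d^(k-1) \<equiv> \<epsilon>_g(d) d^(k-1) mod p^r for all d prime to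
   N_f N_g.  For d = p + N_f N_g the characters take their values at p, and d^(k-1) is a p-adic
   unit, so it can be cancelled. *)

(* The algebraic numbers are closed under + and *: transferred from the subfield of elements
   algebraic over \<rat> in HOL-Algebra. *)

lemma ring_of_type_algebra_simps [simp]:
  "carrier (ring_of_type_algebra :: 'a :: ring_1 ring) = UNIV"
  "monoid.mult (ring_of_type_algebra :: 'a ring) = (*)"
  "one (ring_of_type_algebra :: 'a ring) = 1"
  "zero (ring_of_type_algebra :: 'a ring) = 0"
  "add (ring_of_type_algebra :: 'a ring) = (+)"
  by (simp_all add: ring_of_type_algebra_def)

lemma ring_of_type_algebra_pow [simp]:
  "x [^]\<^bsub>ring_of_type_algebra\<^esub> n = (x :: 'a :: ring_1) ^ n"
  by (induction n) (simp_all add: power_commutes)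

lemma ring_of_type_algebra_minus [simp]:
  "\<ominus>\<^bsub>ring_of_type_algebra\<^esub> x = - (x :: 'a :: comm_ring_1)"
  using abelian_group.minus_equality[OF ring.is_abelian_group[OF ring_from_type_algebra], of "- x" x]
  by simp

lemma ring_of_type_algebra_inv [simp]:
  "x \<noteq> 0 \<Longrightarrow> inv\<^bsub>ring_of_type_algebra\<^esub> x = inverse (x :: 'a :: field)"
  using monoid.inv_char[OF ring.is_monoid[OF ring_from_type_algebra], of x "inverse x"] by simp

lemma eval_ring_of_type_algebra:
  "ring.eval ring_of_type_algebra p x = poly (Poly (rev p)) (x :: 'a :: comm_ring_1)"
  by (induction p)
    (simp_all add: ring.eval.simps[OF ring_from_type_algebra] Poly_append poly_monom mult.commute)

lemma subfield_Rats_ring_of_type_algebra: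
  "subfield \<rat> (ring_of_type_algebra :: 'a :: field_char_0 ring)"
  by (rule field.subfieldI'[OF field_from_type_algebra ring.subringI[OF ring_from_type_algebra]]) auto

lemma algebraic_iff_algebraic_over_Rats:
  "algebraic x \<longleftrightarrow> (ring.algebraic ring_of_type_algebra over \<rat>) (x :: 'a :: field_char_0)"
proof
  assume "algebraic x"
  then obtain q where q: "\<And>i. Polynomial.coeff q i \<in> \<rat>" "q \<noteq> 0" "poly q x = 0"
    by (auto simp: algebraic_altdef)
  have "rev (coeffs q) \<in> carrier (\<rat>[X]\<^bsub>ring_of_type_algebra\<^esub>)"
    using q(1,2)
    by (auto simp: univ_poly_def polynomial_def coeffs_def hd_rev last_coeffs_eq_coeff_degree)
  then show "(ring.algebraic ring_of_type_algebra over \<rat>) x"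
    by (rule ring.algebraicI[OF ring_from_type_algebra])
      (use q in \<open>simp_all add: eval_ring_of_type_algebra\<close>)
next
  assume "(ring.algebraic ring_of_type_algebra over \<rat>) x"
  then obtain p where p: "p \<in> carrier (\<rat>[X]\<^bsub>ring_of_type_algebra\<^esub>)" "p \<noteq> []"
    "ring.eval ring_of_type_algebra p x = 0"
    using domain.algebraicE[OF field.axioms(1)[OF field_from_type_algebra]
        subfieldE(1)[OF subfield_Rats_ring_of_type_algebra]]
    by auto
  then have "set p \<subseteq> \<rat>" "last (rev p) \<noteq> 0"
    by (auto simp: univ_poly_def polynomial_def last_rev)
  then have "\<forall>i. Polynomial.coeff (Poly (rev p)) i \<in> \<rat>" "Poly (rev p) \<noteq> 0"
    using p(2) by (auto simp: nth_default_def rev_nth Poly_eq_0)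
      (metis Nil_is_rev_conv last_replicate replicate_empty)
  with p(3) show "algebraic x"
    unfolding algebraic_altdef eval_ring_of_type_algebra by blast
qed

lemma subfield_algebraic:
  "subfield {x. algebraic x} (ring_of_type_algebra :: 'a :: field_char_0 ring)"
  using field.subfield_of_algebraics[OF field_from_type_algebra subfield_Rats_ring_of_type_algebra]
  by (simp add: algebraic_iff_algebraic_over_Rats)

lemma algebraic_add [intro]: "algebraic x \<Longrightarrow> algebraic y \<Longrightarrow> algebraic (x + y)"
  using subringE(7)[OF subfieldE(1)[OF subfield_algebraic]] by simp

lemma algebraic_mult [intro]: "algebraic x \<Longrightarrow> algebraic y \<Longrightarrow> algebraic (x * y)"
  using subringE(6)[OF subfieldE(1)[OF subfield_algebraic]] by simp

lemma algebraic_diff [intro]: "algebraic x \<Longrightarrow> algebraic y \<Longrightarrow> algebraic (x - y)"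
  using algebraic_add[of x "- y"] by auto

hide_const (open) Divisibility.prime

(* val_ge v t x says x \<in> p^t O; 0 counts as having infinite valuation, whatever v 0 is. *)
definition val_ge :: "(complex \<Rightarrow> real) \<Rightarrow> real \<Rightarrow> complex \<Rightarrow> bool" where
  "val_ge v t x \<longleftrightarrow> algebraic x \<and> (x = 0 \<or> t \<le> v x)"

lemma integral_at_iff_val_ge: "integral_at v x \<longleftrightarrow> val_ge v 0 x"
  by (simp add: integral_at_def val_ge_def)

lemma cong_ppow_iff_val_ge:
  "algebraic x \<Longrightarrow> algebraic y \<Longrightarrow> cong_ppow v r x y \<longleftrightarrow> val_ge v (real r) (x - y)"
  by (auto simp: cong_ppow_def val_ge_def)

locale padic_valuation =
  fixes p :: nat and v :: "complex \<Rightarrow> real"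
  assumes padic_valuation_alg: "padic_valuation_alg p v"
begin

lemma v_of_nat_p: "v (of_nat p) = 1"
  using padic_valuation_alg by (simp add: padic_valuation_alg_def)

lemma v_mult:
  "algebraic x \<Longrightarrow> algebraic y \<Longrightarrow> x \<noteq> 0 \<Longrightarrow> y \<noteq> 0 \<Longrightarrow> v (x * y) = v x + v y"
  using padic_valuation_alg by (simp add: padic_valuation_alg_def)

lemma v_add:
  "algebraic x \<Longrightarrow> algebraic y \<Longrightarrow> x \<noteq> 0 \<Longrightarrow> y \<noteq> 0 \<Longrightarrow> x + y \<noteq> 0 \<Longrightarrow>
     min (v x) (v y) \<le> v (x + y)"
  using padic_valuation_alg by (simp add: padic_valuation_alg_def)

lemma v_one: "v 1 = 0"
  using v_mult[of 1 1] by simp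

lemma v_minus: "algebraic x \<Longrightarrow> x \<noteq> 0 \<Longrightarrow> v (- x) = v x"
  using v_mult[of "-1" "-1"] v_mult[of "-1" x] by (simp add: v_one)

lemma val_ge_0 [simp]: "val_ge v t 0"
  by (simp add: val_ge_def)

lemma val_ge_one: "val_ge v 0 1"
  by (simp add: val_ge_def v_one)

lemma val_ge_add: "val_ge v t x \<Longrightarrow> val_ge v t y \<Longrightarrow> val_ge v t (x + y)"
  unfolding val_ge_def using v_add[of x y] by fastforce

lemma val_ge_minus: "val_ge v t x \<Longrightarrow> val_ge v t (- x)"
  unfolding val_ge_def using v_minus[of x] by fastforce

lemma val_ge_diff: "val_ge v t x \<Longrightarrow> val_ge v t y \<Longrightarrow> val_ge v t (x - y)"
  using val_ge_add[of t x "- y"] val_ge_minus[of t y] by simp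

lemma val_ge_mult: "val_ge v s x \<Longrightarrow> val_ge v t y \<Longrightarrow> val_ge v (s + t) (x * y)"
  unfolding val_ge_def using v_mult[of x y] by fastforce

lemma val_ge_sum: "(\<And>i. i \<in> A \<Longrightarrow> val_ge v t (f i)) \<Longrightarrow> val_ge v t (\<Sum>i\<in>A. f i)"
  by (induction A rule: infinite_finite_induct) (simp_all add: val_ge_add)

lemma val_ge_power: "val_ge v t x \<Longrightarrow> val_ge v (real n * t) (x ^ n)"
  by (induction n) (simp_all add: val_ge_one val_ge_mult algebra_simps)

lemma val_ge_of_nat: "val_ge v 0 (of_nat n)"
  by (induction n) (simp_all add: val_ge_one val_ge_add)

lemma val_ge_diff_mult:
  assumes "val_ge v 0 x" "val_ge v 0 y'" "val_ge v t (x - x')" "val_ge v t (y - y')"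
  shows "val_ge v t (x * y - x' * y')"
proof -
  have "x * y - x' * y' = x * (y - y') + (x - x') * y'"
    by (simp add: algebra_simps)
  then show ?thesis
    using val_ge_mult[OF assms(1,4)] val_ge_mult[OF assms(3,2)] by (simp add: val_ge_add)
qed

lemma v_of_nat_eq_0:
  assumes "prime p" "\<not> p dvd n"
  shows "v (of_nat n) = 0"
proof (rule ccontr)
  assume "v (of_nat n) \<noteq> 0"
  moreover have "n \<noteq> 0"
    using assms(2) by (metis dvd_0_right)
  ultimately have pos: "v (of_nat n) > 0"
    using val_ge_of_nat[of n] by (simp add: val_ge_def order_le_neq_trans)
  define s where "s = min (v (of_nat n)) 1"
  have s: "0 < s" "val_ge v s (of_nat n)" "val_ge v s (of_nat p)"
    using pos by (auto simp: s_def val_ge_def v_of_nat_p)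
  have "coprime n p"
    using prime_imp_coprime[OF assms] by (simp add: coprime_commute)
  then obtain u w where uw: "n * u = p * w + 1"
    using bezout_nat[OF \<open>n \<noteq> 0\<close>, of p] by auto
  have "val_ge v s (of_nat n * of_nat u - of_nat p * of_nat w)"
    using val_ge_mult[OF s(2) val_ge_of_nat] val_ge_mult[OF s(3) val_ge_of_nat]
    by (simp add: val_ge_diff)
  also have "of_nat n * of_nat u - of_nat p * of_nat w = (1 :: complex)"
    using arg_cong[OF uw, of "of_nat :: nat \<Rightarrow> complex"] by simp
  finally show False
    using s(1) by (simp add: val_ge_def v_one)
qed

lemma val_ge_cancel_of_nat:
  assumes "prime p" "\<not> p dvd n" "val_ge v t (of_nat n * x)" "algebraic x"
  shows "val_ge v t x"
proof -
  have "n \<noteq> 0"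
    using assms(2) by (metis dvd_0_right)
  then show ?thesis
    using assms v_mult[of "of_nat n" x] v_of_nat_eq_0[OF assms(1,2)]
    by (cases "x = 0") (auto simp: val_ge_def)
qed

lemma val_ge_weight_diff_of_square_relations:
  fixes a b Ea Eb :: "nat \<Rightarrow> complex"
  assumes rel_a: "\<And>d. d \<ge> 1 \<Longrightarrow> (\<Sum>e | e dvd d. Ea e * a (d * d div (e * e))) = a d * a d"
    and rel_b: "\<And>d. d \<ge> 1 \<Longrightarrow> (\<Sum>e | e dvd d. Eb e * b (d * d div (e * e))) = b d * b d"
    and a1: "a 1 = 1" and b1: "b 1 = 1"
    and int_a: "\<And>n. val_ge v 0 (a n)" and int_b: "\<And>n. val_ge v 0 (b n)"
    and int_Ea: "\<And>n. val_ge v 0 (Ea n)"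
    and cong: "\<And>m. coprime m M \<Longrightarrow> val_ge v t (a m - b m)"
  shows "d \<ge> 1 \<Longrightarrow> coprime d M \<Longrightarrow> val_ge v t (Ea d - Eb d)"
proof (induction d rule: less_induct)
  case (less d)
  define j where "j e = d * d div (e * e)" for e
  define D where "D = {e. e dvd d} - {d}"
  have split: "(\<Sum>e | e dvd d. E e * c (j e)) = E d * c 1 + (\<Sum>e\<in>D. E e * c (j e))"
    for E c :: "nat \<Rightarrow> complex"
    using less.prems(1) sum.remove[of "{e. e dvd d}" d "\<lambda>e. E e * c (j e)"]
    by (simp add: D_def j_def)
  have "Ea d - Eb d = (a d * a d - b d * b d) - (\<Sum>e\<in>D. Ea e * a (j e) - Eb e * b (j e))"
    using rel_a[OF less.prems(1)] rel_b[OF less.prems(1)] split[of Ea a] split[of Eb b] a1 b1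
    by (simp add: j_def sum_subtractf)
  moreover have "val_ge v t (a d * a d - b d * b d)"
    using int_a int_b cong[OF less.prems(2)] by (simp add: val_ge_diff_mult)
  moreover have "val_ge v t (Ea e * a (j e) - Eb e * b (j e))" if "e \<in> D" for e
  proof -
    have "e dvd d" "e < d" "e \<ge> 1"
      using that less.prems(1) by (auto simp: D_def dvd_imp_le le_neq_implies_less intro: Nat.gr0I)
    have "coprime e M"
      using coprime_divisors[OF \<open>e dvd d\<close> dvd_refl less.prems(2)] .
    have "j e dvd d * d"
      using \<open>e dvd d\<close> by (auto simp: j_def dvd_div_iff_mult mult_dvd_mono)
    then have "coprime (j e) M"
      using coprime_divisors[OF _ dvd_refl, of "j e" "d * d" M] less.prems(2) by simp
    have "val_ge v t (Ea e - Eb e)" "val_ge v t (a (j e) - b (j e))"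
      using less.IH[OF \<open>e < d\<close> \<open>e \<ge> 1\<close> \<open>coprime e M\<close>] cong[OF \<open>coprime (j e) M\<close>] .
    then show ?thesis
      using int_Ea int_b by (simp add: val_ge_diff_mult)
  qed
  ultimately show ?case
    by (simp add: val_ge_diff val_ge_sum)
qed

end

lemma dirichlet_char_normalized_eigenform:
  "normalized_eigenform k N eps f a \<Longrightarrow> dirichlet_char N eps"
  by (simp add: normalized_eigenform_def cusp_form_def)

lemma hecke_coeff_normalized_eigenform:
  assumes "normalized_eigenform k N eps f a" "n \<ge> 1"
  shows "hecke_coeff k eps n a m = a n * a m"
proof -
  obtain c where c: "\<And>m. hecke_coeff k eps n a m = c * a m"
    using assms unfolding normalized_eigenform_def by blast
  have "eps 1 = 1" "a 1 = 1"
    using assms(1) dirichlet_char_normalized_eigenform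
    by (auto simp: normalized_eigenform_def dirichlet_char_def)
  moreover have "{d. d dvd gcd 1 n} = {1}"
    by auto
  ultimately have "hecke_coeff k eps n a 1 = a n"
    by (simp add: hecke_coeff_def)
  then show ?thesis
    using c[of 1] c[of m] \<open>a 1 = 1\<close> by simp
qed

lemma dirichlet_char_add_mult_level:
  assumes "dirichlet_char N eps"
  shows "eps (n + int (N * j)) = eps n"
proof (induction j)
  case (Suc j)
  have "eps (n + int (N * Suc j)) = eps ((n + int (N * j)) + int N)"
    by (simp add: algebra_simps)
  with Suc assms show ?case
    by (simp add: dirichlet_char_def)
qed simp

lemma square_relation_normalized_eigenform:
  assumes "normalized_eigenform k N eps f a" "d \<ge> 1"
  shows "(\<Sum>e | e dvd d. eps (int e) * of_nat e ^ (k - 1) * a (d * d div (e * e))) = a d * a d"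
  using hecke_coeff_normalized_eigenform[OF assms, of d] by (simp add: hecke_coeff_def)

lemma (in padic_valuation) val_ge_weighted_char_diff_of_congruent_eigenforms:
  assumes f: "normalized_eigenform k Nf epsf f a" and g: "normalized_eigenform k Ng epsg g b"
    and int_a: "\<And>n. val_ge v 0 (a n)" and int_b: "\<And>n. val_ge v 0 (b n)"
    and int_eps: "\<And>n. val_ge v 0 (epsf n)"
    and cong: "\<And>m. coprime m M \<Longrightarrow> val_ge v t (a m - b m)"
    and "d \<ge> 1" "coprime d M"
  shows "val_ge v t (of_nat (d ^ (k - 1)) * (epsf (int d) - epsg (int d)))"
proof -
  have "val_ge v 0 (epsf (int n) * of_nat n ^ (k - 1))" for n
    using val_ge_mult[OF int_eps val_ge_power[OF val_ge_of_nat]] by simp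
  then have "val_ge v t (epsf (int d) * of_nat d ^ (k - 1) - epsg (int d) * of_nat d ^ (k - 1))"
    using val_ge_weight_diff_of_square_relations[OF square_relation_normalized_eigenform[OF f]
        square_relation_normalized_eigenform[OF g] _ _ int_a int_b _ cong \<open>d \<ge> 1\<close> \<open>coprime d M\<close>]
      f g by (simp add: normalized_eigenform_def)
  then show ?thesis
    by (simp add: algebra_simps)
qed

lemma (in padic_valuation) val_ge_char_diff_at_prime_of_congruent_eigenforms:
  assumes "prime p" "\<not> p dvd Nf * Ng"
    and f: "normalized_eigenform k Nf epsf f a" and g: "normalized_eigenform k Ng epsg g b"
    and int_a: "\<And>n. val_ge v 0 (a n)" and int_b: "\<And>n. val_ge v 0 (b n)"
    and int_eps: "\<And>n. val_ge v 0 (epsf n)" "\<And>n. val_ge v 0 (epsg n)"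
    and cong: "\<And>m. coprime m (Nf * Ng) \<Longrightarrow> val_ge v t (a m - b m)"
  shows "val_ge v t (epsf (int p) - epsg (int p))"
proof -
  define d where "d = p + Nf * Ng"
  have "d \<ge> 1" "\<not> p dvd d"
    using assms(2) prime_gt_0_nat[OF assms(1)] by (simp_all add: d_def dvd_add_right_iff)
  have "coprime d (Nf * Ng)"
    using prime_imp_coprime[OF assms(1,2)] unfolding d_def coprime_iff_gcd_eq_1 gcd_add1 .
  have "epsf (int d) = epsf (int p)" "epsg (int d) = epsg (int p)"
    using dirichlet_char_add_mult_level[OF dirichlet_char_normalized_eigenform[OF f], of "int p" Ng]
      dirichlet_char_add_mult_level[OF dirichlet_char_normalized_eigenform[OF g], of "int p" Nf]
    by (simp_all add: d_def mult.commute)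
  then have "val_ge v t (of_nat (d ^ (k - 1)) * (epsf (int p) - epsg (int p)))"
    using val_ge_weighted_char_diff_of_congruent_eigenforms[OF f g int_a int_b int_eps(1) cong
        \<open>d \<ge> 1\<close> \<open>coprime d (Nf * Ng)\<close>] by simp
  moreover have "\<not> p dvd d ^ (k - 1)"
    using \<open>\<not> p dvd d\<close> assms(1) by (metis prime_dvd_power_nat power_0 prime_nat_iff)
  moreover have "algebraic (epsf (int p) - epsg (int p))"
    using int_eps by (auto simp: val_ge_def)
  ultimately show ?thesis
    using val_ge_cancel_of_nat[OF assms(1)] by blast
qed

theorem lemma4p3:
  fixes p k Nf Ng r :: nat and v :: "complex \<Rightarrow> real"
    and epsf epsg :: "int \<Rightarrow> complex" and f g :: "complex \<Rightarrow> complex"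
    and a b :: "nat \<Rightarrow> complex"
  assumes "prime p" and "odd p"
    and "padic_valuation_alg p v"
    and "r \<ge> 1"
    and "normalized_eigenform k Nf epsf f a"
    and "normalized_eigenform k Ng epsg g b"
    and "\<not> p dvd Nf * Ng"
    and "\<forall>n. integral_at v (a n) \<and> integral_at v (b n)"
    and "\<forall>n. integral_at v (epsf n) \<and> integral_at v (epsg n)"
    and "\<forall>m. coprime m (Nf * Ng) \<longrightarrow> cong_ppow v r (a m) (b m)"
  shows "cong_ppow v r (epsf (int p)) (epsg (int p))"
proof -
  interpret padic_valuation p v
    using assms(3) by unfold_locales
  have int_a: "val_ge v 0 (a n)" and int_b: "val_ge v 0 (b n)"
    and int_eps: "val_ge v 0 (epsf m)" "val_ge v 0 (epsg m)" for n m
    using assms(8,9) by (simp_all add: integral_at_iff_val_ge)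
  then have "val_ge v r (a m - b m)" if "coprime m (Nf * Ng)" for m
    using assms(10) that by (simp add: cong_ppow_iff_val_ge val_ge_def)
  then have "val_ge v r (epsf (int p) - epsg (int p))"
    using val_ge_char_diff_at_prime_of_congruent_eigenforms[OF assms(1,7,5,6) int_a int_b int_eps]
    by blast
  then show ?thesis
    by (simp add: cong_ppow_def val_ge_def)
qed

end
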